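(* Let $n\ge 7$ and let $T_n^1(3,3)$ be the graph obtained from two vertex-disjoint triangles $v_1v_2v_3$ and $w_1w_2w_3$ joined by the edge $v_3w_1$, by attaching $n-6$ pendant edges (new leaves) to $v_3$. Then \[ \operatorname{avm}(T_n^1(3,3))=3-\frac{6}{3n-11}. \]
   Context: $\operatorname{avm}(G)$ is the average of $|M|$ over all maximal matchings $M$ of $G$ (a matching is maximal if not properly contained in another matching). *)

theory Defs
  imports Complex_Main
begin

text \<open>A simple graph is given by its edge set: a set of 2-element vertex sets.\<close>

definition matching :: "'a set set \<Rightarrow> 'a set set \<Rightarrow> bool" where
  "matching E M \<longleftrightarrow> M \<subseteq> E \<and> (\<forall>e\<in>M. \<forall>f\<in>M. e \<noteq> f \<longrightarrow> e \<inter> f = {})"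

definition maximal_matching :: "'a set set \<Rightarrow> 'a set set \<Rightarrow> bool" where
  "maximal_matching E M \<longleftrightarrow> matching E M \<and> \<not> (\<exists>M'. matching E M' \<and> M \<subset> M')"

definition avm :: "'a set set \<Rightarrow> real" where
  "avm E = (\<Sum>M\<in>{M. maximal_matching E M}. real (card M)) / real (card {M. maximal_matching E M})"

text \<open>T_n^1(3,3) on vertices 1..n: v1=1, v2=2, v3=3, w1=4, w2=5, w3=6,
  leaves 7..n attached to v3.\<close>

definition T1_33 :: "nat \<Rightarrow> nat set set" where
  "T1_33 n = {{1,2},{2,3},{1,3},{4,5},{5,6},{4,6},{3,4}} \<union> {{3,k} | k. 7 \<le> k \<and> k \<le> n}"

end

theory Submission
  imports Defs
begin

(* Vertex 3 carries the pendant edge {3,n}, so every maximal matching M contains exactly one edge e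
   at 3, and M - {e} is a maximal matching of the graph left after deleting both ends of e.
   Deleting {1,3} or {2,3} leaves the triangle on 4,5,6, with 3 maximal matchings of one edge;
   deleting {3,4} leaves the two disjoint edges {1,2} and {5,6}; deleting a leaf edge {3,k} leaves
   the edge {1,2} beside that triangle, again with 3 maximal matchings. So T1_33 n has
   6 + 1 + 3(n - 6) = 3n - 11 maximal matchings, of total size 6*2 + 3 + 9(n - 6) = 9n - 39. *)

abbreviation maximal_matchings :: "'a set set \<Rightarrow> 'a set set set" where
  "maximal_matchings E \<equiv> {M. maximal_matching E M}"

definition delete_vertices :: "'a set set \<Rightarrow> 'a set \<Rightarrow> 'a set set" where
  "delete_vertices E X = {e \<in> E. e \<inter> X = {}}"

lemma maximal_matching_iff:
  "maximal_matching E M \<longleftrightarrow> matching E M \<and> (\<forall>e\<in>E - M. \<exists>f\<in>M. e \<inter> f \<noteq> {})"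
proof
  assume max: "maximal_matching E M"
  then have match: "matching E M" unfolding maximal_matching_def by blast
  have "\<exists>f\<in>M. e \<inter> f \<noteq> {}" if e: "e \<in> E - M" for e
  proof (rule ccontr)
    assume "\<not> (\<exists>f\<in>M. e \<inter> f \<noteq> {})"
    then have "matching E (insert e M)"
      using match e unfolding matching_def by (auto simp: Int_commute)
    then show False using max e unfolding maximal_matching_def by blast
  qed
  with match show "matching E M \<and> (\<forall>e\<in>E - M. \<exists>f\<in>M. e \<inter> f \<noteq> {})" by blast
next
  assume match: "matching E M \<and> (\<forall>e\<in>E - M. \<exists>f\<in>M. e \<inter> f \<noteq> {})"
  have False if "matching E M'" "M \<subset> M'" for M'
  proof -
    obtain e where e: "e \<in> M'" "e \<notin> M" using \<open>M \<subset> M'\<close> by blast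
    then have "e \<in> E" using \<open>matching E M'\<close> unfolding matching_def by blast
    then obtain f where "f \<in> M" "e \<inter> f \<noteq> {}" using match e by blast
    moreover have "f \<in> M'" "f \<noteq> e" using \<open>f \<in> M\<close> \<open>M \<subset> M'\<close> e by auto
    ultimately show False using \<open>matching E M'\<close> e unfolding matching_def by blast
  qed
  with match show "maximal_matching E M" unfolding maximal_matching_def by blast
qed

lemma finite_maximal_matchings: "finite E \<Longrightarrow> finite (maximal_matchings E)"
  by (rule finite_subset[of _ "Pow E"]) (auto simp: maximal_matching_def matching_def)

lemma maximal_matchings_empty: "maximal_matchings {} = {{}}"
  by (auto simp: maximal_matching_iff matching_def)

lemma maximal_matchings_pairwise_intersecting:
  assumes "E \<noteq> {}" "\<forall>e\<in>E. \<forall>f\<in>E. e \<inter> f \<noteq> {}"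
  shows "maximal_matchings E = (\<lambda>e. {e}) ` E"
proof (intro equalityI subsetI)
  fix M assume "M \<in> maximal_matchings E"
  then have max: "matching E M" "\<forall>e\<in>E - M. \<exists>f\<in>M. e \<inter> f \<noteq> {}"
    by (simp_all add: maximal_matching_iff)
  obtain e where "e \<in> E" using assms(1) by blast
  then obtain f where f: "f \<in> M" using max(2) by blast
  have "g = f" if "g \<in> M" for g
    using that f max(1) assms(2) unfolding matching_def by (meson subsetD)
  then have "M = {f}" using f by blast
  moreover have "f \<in> E" using f max(1) unfolding matching_def by blast
  ultimately show "M \<in> (\<lambda>e. {e}) ` E" by blast
next
  fix M assume "M \<in> (\<lambda>e. {e}) ` E"
  then show "M \<in> maximal_matchings E"
    using assms(2) by (auto simp: maximal_matching_iff matching_def)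
qed

lemma matching_insert_iff:
  assumes "e \<in> E" "e \<noteq> {}" "e \<notin> M"
  shows "matching E (insert e M) \<longleftrightarrow> matching (delete_vertices E e) M"
proof
  assume "matching E (insert e M)"
  then show "matching (delete_vertices E e) M"
    using assms(3) unfolding matching_def delete_vertices_def by (auto simp: Int_commute)
next
  assume "matching (delete_vertices E e) M"
  then have "M \<subseteq> E" "\<forall>f\<in>M. f \<inter> e = {}" "\<forall>f\<in>M. \<forall>g\<in>M. f \<noteq> g \<longrightarrow> f \<inter> g = {}"
    unfolding matching_def delete_vertices_def by blast+
  then show "matching E (insert e M)"
    using assms(1) unfolding matching_def by (simp add: Int_commute)
qed

lemma maximal_matching_insert_iff:
  assumes "e \<in> E" "e \<noteq> {}" "e \<notin> M"
  shows "maximal_matching E (insert e M) \<longleftrightarrow> maximal_matching (delete_vertices E e) M"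
proof -
  have "(\<forall>f\<in>E - insert e M. \<exists>g\<in>insert e M. f \<inter> g \<noteq> {}) \<longleftrightarrow>
      (\<forall>f\<in>delete_vertices E e - M. \<exists>g\<in>M. f \<inter> g \<noteq> {})"
    using assms(2) unfolding delete_vertices_def by auto
  then show ?thesis
    using matching_insert_iff[OF assms] by (simp add: maximal_matching_iff)
qed

lemma maximal_matching_covers_pendant_neighbour:
  assumes "maximal_matching E M" "{u, v} \<in> E" "\<forall>e\<in>E. u \<in> e \<longrightarrow> v \<in> e"
  shows "\<exists>e\<in>M. v \<in> e"
proof (cases "{u, v} \<in> M")
  case False
  then obtain f where "f \<in> M" "{u, v} \<inter> f \<noteq> {}"
    using assms(1,2) unfolding maximal_matching_iff by blast
  moreover have "f \<in> E"
    using \<open>f \<in> M\<close> assms(1) unfolding maximal_matching_def matching_def by blast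
  ultimately show ?thesis using assms(3) by blast
qed auto

lemma edge_notin_matching_delete_vertices:
  "matching (delete_vertices E e) M \<Longrightarrow> e \<noteq> {} \<Longrightarrow> e \<notin> M"
  unfolding matching_def delete_vertices_def by blast

lemma maximal_matchings_split_at_vertex:
  assumes "\<And>M. maximal_matching E M \<Longrightarrow> \<exists>e\<in>M. v \<in> e"
  shows "maximal_matchings E =
    (\<Union>e\<in>{e\<in>E. v \<in> e}. insert e ` maximal_matchings (delete_vertices E e))"
proof (intro equalityI subsetI)
  fix M assume "M \<in> maximal_matchings E"
  then have M: "maximal_matching E M" by simp
  then obtain e where e: "e \<in> M" "v \<in> e" using assms by blast
  then have "e \<in> E" using M unfolding maximal_matching_def matching_def by blast
  with M e have "maximal_matching (delete_vertices E e) (M - {e})"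
    using maximal_matching_insert_iff[of e E "M - {e}"] by (auto simp: insert_absorb)
  moreover have "M = insert e (M - {e})" using e by blast
  ultimately show "M \<in> (\<Union>e\<in>{e\<in>E. v \<in> e}. insert e ` maximal_matchings (delete_vertices E e))"
    using \<open>e \<in> E\<close> e by blast
next
  fix M assume "M \<in> (\<Union>e\<in>{e\<in>E. v \<in> e}. insert e ` maximal_matchings (delete_vertices E e))"
  then obtain e M' where e: "e \<in> E" "v \<in> e" and M: "M = insert e M'"
    and M': "maximal_matching (delete_vertices E e) M'" by blast
  moreover have "e \<notin> M'"
    using M' e(2) edge_notin_matching_delete_vertices unfolding maximal_matching_def by blast
  ultimately show "M \<in> maximal_matchings E"
    using maximal_matching_insert_iff by blast
qed

lemma sum_maximal_matchings_split_at_vertex: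
  assumes "finite E" "\<And>M. maximal_matching E M \<Longrightarrow> \<exists>e\<in>M. v \<in> e"
  shows "(\<Sum>M\<in>maximal_matchings E. g (card M)) =
    (\<Sum>e | e \<in> E \<and> v \<in> e. \<Sum>M\<in>maximal_matchings (delete_vertices E e). g (Suc (card M)))"
proof -
  define R where "R e = maximal_matchings (delete_vertices E e)" for e
  have finite_R: "finite (R e)" for e
    unfolding R_def delete_vertices_def using assms(1) by (simp add: finite_maximal_matchings)
  have notin_R: "e \<notin> M" if "v \<in> e" "M \<in> R e" for e M
    using that edge_notin_matching_delete_vertices unfolding R_def maximal_matching_def by blast
  have card_insert_R: "card (insert e M) = Suc (card M)" if "v \<in> e" "M \<in> R e" for e M
  proof -
    have "M \<subseteq> E"
      using that(2) unfolding R_def maximal_matching_def matching_def delete_vertices_def by blast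
    then show ?thesis using finite_subset[OF _ assms(1)] notin_R[OF that] by simp
  qed
  have split: "maximal_matchings E = (\<Union>e\<in>{e\<in>E. v \<in> e}. insert e ` R e)"
    unfolding R_def by (rule maximal_matchings_split_at_vertex[OF assms(2)])
  have disjoint: "insert e ` R e \<inter> insert e' ` R e' = {}"
    if e: "e \<in> {e\<in>E. v \<in> e}" "e' \<in> {e\<in>E. v \<in> e}" "e \<noteq> e'" for e e'
  proof (rule ccontr)
    assume "insert e ` R e \<inter> insert e' ` R e' \<noteq> {}"
    then obtain M where M: "M \<in> insert e ` R e" "M \<in> insert e' ` R e'" by blast
    then have "M \<in> (\<Union>e\<in>{e\<in>E. v \<in> e}. insert e ` R e)" using e(1) by blast
    then have "matching E M" unfolding split[symmetric] maximal_matching_def by blast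
    moreover have "e \<in> M" "e' \<in> M" using M by auto
    ultimately have "e \<inter> e' = {}" using e(3) unfolding matching_def by blast
    then show False using e by blast
  qed
  have "(\<Sum>M\<in>maximal_matchings E. g (card M)) =
      (\<Sum>e | e \<in> E \<and> v \<in> e. \<Sum>M\<in>insert e ` R e. g (card M))"
    unfolding split using assms(1) finite_R disjoint by (intro sum.UNION_disjoint) simp_all
  also have "\<dots> = (\<Sum>e | e \<in> E \<and> v \<in> e. \<Sum>M\<in>R e. g (Suc (card M)))"
  proof (rule sum.cong[OF refl])
    fix e assume "e \<in> {e. e \<in> E \<and> v \<in> e}"
    then have "inj_on (insert e) (R e)" using notin_R by (auto intro!: inj_onI simp: insert_ident)
    then show "(\<Sum>M\<in>insert e ` R e. g (card M)) = (\<Sum>M\<in>R e. g (Suc (card M)))"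
      using \<open>e \<in> {e. e \<in> E \<and> v \<in> e}\<close> card_insert_R by (simp add: sum.reindex)
  qed
  finally show ?thesis unfolding R_def .
qed

lemma sum_maximal_matchings_pairwise_intersecting:
  fixes g :: "nat \<Rightarrow> 'b::comm_semiring_1"
  assumes "E \<noteq> {}" "\<forall>e\<in>E. \<forall>f\<in>E. e \<inter> f \<noteq> {}"
  shows "(\<Sum>M\<in>maximal_matchings E. g (card M)) = of_nat (card E) * g 1"
proof -
  have "inj_on (\<lambda>e. {e}) E" by (rule inj_onI) simp
  then show ?thesis by (simp add: maximal_matchings_pairwise_intersecting[OF assms] sum.reindex)
qed

lemma sum_maximal_matchings_triangle:
  fixes g :: "nat \<Rightarrow> 'b::comm_semiring_1"
  assumes "distinct [a, b, c]"
  shows "(\<Sum>M\<in>maximal_matchings {{a, b}, {b, c}, {a, c}}. g (card M)) = 3 * g 1"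
proof -
  have "card {{a, b}, {b, c}, {a, c}} = 3"
    using assms by (auto simp: card_insert_if doubleton_eq_iff)
  then show ?thesis by (simp add: sum_maximal_matchings_pairwise_intersecting)
qed

lemma sum_maximal_matchings_insert_isolated_edge:
  assumes "finite E" "a \<notin> \<Union>E" "b \<notin> \<Union>E"
  shows "(\<Sum>M\<in>maximal_matchings (insert {a, b} E). g (card M)) =
    (\<Sum>M\<in>maximal_matchings E. g (Suc (card M)))"
proof -
  have covered: "\<exists>e\<in>M. a \<in> e" if "maximal_matching (insert {a, b} E) M" for M
  proof (rule maximal_matching_covers_pendant_neighbour[OF that])
    show "{b, a} \<in> insert {a, b} E" by (simp add: insert_commute)
    show "\<forall>e\<in>insert {a, b} E. b \<in> e \<longrightarrow> a \<in> e" using assms(3) by blast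
  qed
  have "{e \<in> insert {a, b} E. a \<in> e} = {{a, b}}" using assms(2) by auto
  moreover have "delete_vertices (insert {a, b} E) {a, b} = E"
    using assms(2,3) unfolding delete_vertices_def by auto
  ultimately show ?thesis
    using sum_maximal_matchings_split_at_vertex[OF _ covered, where g = g] assms(1) by simp
qed

lemma mem_T1_33:
  "e \<in> T1_33 n \<longleftrightarrow> e = {1,2} \<or> e = {2,3} \<or> e = {1,3} \<or> e = {4,5} \<or> e = {5,6} \<or> e = {4,6} \<or>
    e = {3,4} \<or> (\<exists>k. e = {3,k} \<and> 7 \<le> k \<and> k \<le> n)"
  unfolding T1_33_def Un_iff insert_iff mem_Collect_eq empty_iff by (simp only: disj_assoc simp_thms)

lemma T1_33_eq_image:
  "T1_33 n = {{1,2},{2,3},{1,3},{4,5},{5,6},{4,6},{3,4}} \<union> (\<lambda>k. {3,k}) ` {7..n}"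
proof -
  have "{k. 7 \<le> k \<and> k \<le> n} = {7..n}" by auto
  then show ?thesis unfolding T1_33_def by (simp add: setcompr_eq_image)
qed

lemma finite_T1_33: "finite (T1_33 n)"
  unfolding T1_33_eq_image by simp

lemma maximal_matching_T1_33_covers_3:
  assumes "n \<ge> 7" "maximal_matching (T1_33 n) M"
  shows "\<exists>e\<in>M. 3 \<in> e"
proof (rule maximal_matching_covers_pendant_neighbour[OF assms(2), of n])
  show "{n, 3} \<in> T1_33 n"
    using assms(1) unfolding T1_33_eq_image insert_commute[of n] by (intro UnI2 imageI) simp
  show "\<forall>e\<in>T1_33 n. n \<in> e \<longrightarrow> 3 \<in> e"
    using assms(1) unfolding T1_33_eq_image by simp
qed

lemma edges_at_3_T1_33:
  "{e \<in> T1_33 n. 3 \<in> e} = insert {2,3} (insert {1,3} (insert {3,4} ((\<lambda>k. {3,k}) ` {7..n})))"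
proof (intro equalityI subsetI)
  fix e assume "e \<in> {e \<in> T1_33 n. 3 \<in> e}"
  then have "e \<in> T1_33 n" "3 \<in> e" by simp_all
  then show "e \<in> insert {2,3} (insert {1,3} (insert {3,4} ((\<lambda>k. {3,k}) ` {7..n})))"
    unfolding mem_T1_33 by (elim disjE exE conjE) simp_all
next
  fix e assume "e \<in> insert {2,3} (insert {1,3} (insert {3,4} ((\<lambda>k. {3,k}) ` {7..n})))"
  then show "e \<in> {e \<in> T1_33 n. 3 \<in> e}"
    unfolding mem_Collect_eq T1_33_eq_image by (elim insertE imageE) simp_all
qed

lemma delete_vertices_T1_33:
  "delete_vertices (T1_33 n) {1,3} = {{4,5},{5,6},{4,6}}"
  "delete_vertices (T1_33 n) {2,3} = {{4,5},{5,6},{4,6}}"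
  "delete_vertices (T1_33 n) {3,4} = {{1,2},{5,6}}"
  "7 \<le> k \<Longrightarrow> delete_vertices (T1_33 n) {3,k} = {{1,2},{4,5},{5,6},{4,6}}"
  unfolding delete_vertices_def
  by (intro equalityI subsetI; simp only: mem_Collect_eq mem_T1_33 insert_iff empty_iff;
      elim conjE disjE exE; simp)+

lemma sum_maximal_matchings_T1_33:
  fixes g :: "nat \<Rightarrow> real"
  assumes "n \<ge> 7"
  shows "(\<Sum>M\<in>maximal_matchings (T1_33 n). g (card M)) = 6 * g 2 + (3 * real n - 17) * g 3"
proof -
  define W :: "nat set set" where "W = {{4,5},{5,6},{4,6}}"
  define via where
    "via e = (\<Sum>M\<in>maximal_matchings (delete_vertices (T1_33 n) e). g (Suc (card M)))" for e
  have triangle: "(\<Sum>M\<in>maximal_matchings W. h (card M)) = 3 * h 1" for h :: "nat \<Rightarrow> real"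
    unfolding W_def by (rule sum_maximal_matchings_triangle) simp
  have via_13: "via {1,3} = 3 * g 2" and via_23: "via {2,3} = 3 * g 2"
    unfolding via_def delete_vertices_T1_33 W_def[symmetric]
    using triangle[of "\<lambda>m. g (Suc m)"] by (simp_all add: numeral_2_eq_2)
  have "via {3,4} = (\<Sum>M\<in>maximal_matchings {{5,6::nat}}. g (Suc (Suc (card M))))"
    unfolding via_def delete_vertices_T1_33 by (rule sum_maximal_matchings_insert_isolated_edge) auto
  also have "\<dots> = (\<Sum>M\<in>maximal_matchings ({} :: nat set set). g (Suc (Suc (Suc (card M)))))"
    by (rule sum_maximal_matchings_insert_isolated_edge) auto
  finally have via_34: "via {3,4} = g 3" by (simp add: maximal_matchings_empty numeral_3_eq_3)
  have via_leaf: "via {3,k} = 3 * g 3" if "k \<in> {7..n}" for k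
  proof -
    have "via {3,k} = (\<Sum>M\<in>maximal_matchings (insert {1,2} W). g (Suc (card M)))"
      using that unfolding via_def W_def by (simp add: delete_vertices_T1_33)
    also have "\<dots> = (\<Sum>M\<in>maximal_matchings W. g (Suc (Suc (card M))))"
      unfolding W_def by (rule sum_maximal_matchings_insert_isolated_edge) auto
    also have "\<dots> = 3 * g 3"
      using triangle[of "\<lambda>m. g (Suc (Suc m))"] by (simp add: numeral_3_eq_3)
    finally show ?thesis .
  qed
  have leaves_inj: "inj_on (\<lambda>k. {3,k}) {7..n}"
    by (auto simp: doubleton_eq_iff intro!: inj_onI)
  have "(\<Sum>M\<in>maximal_matchings (T1_33 n). g (card M)) = (\<Sum>e\<in>{e \<in> T1_33 n. 3 \<in> e}. via e)"
    unfolding via_def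
    using sum_maximal_matchings_split_at_vertex
      [OF finite_T1_33 maximal_matching_T1_33_covers_3[OF assms]] .
  also have "\<dots> = via {2,3} + via {1,3} + via {3,4} + (\<Sum>k\<in>{7..n}. via {3,k})"
    unfolding edges_at_3_T1_33 using leaves_inj
    by (simp add: doubleton_eq_iff image_iff sum.reindex del: One_nat_def)
  \<comment> \<open>One_nat_def would turn {1,3} into {Suc 0,3} and stop via_13 from applying.\<close>
  also have "\<dots> = 6 * g 2 + (3 * real n - 17) * g 3"
    using assms by (simp add: via_13 via_23 via_34 via_leaf of_nat_diff algebra_simps del: One_nat_def)
  finally show ?thesis .
qed

theorem lemma4p1:
  fixes n :: nat
  assumes "n \<ge> 7"
  shows "avm (T1_33 n) = 3 - 6 / (3 * real n - 11)"
proof -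
  have count: "real (card (maximal_matchings (T1_33 n))) = 3 * real n - 11"
    using sum_maximal_matchings_T1_33[OF assms, of "\<lambda>_. 1"] by simp
  have size: "(\<Sum>M\<in>maximal_matchings (T1_33 n). real (card M)) = 9 * real n - 39"
    using sum_maximal_matchings_T1_33[OF assms, of real] by simp
  have "3 * real n - 11 \<noteq> 0" using assms by simp
  then show ?thesis unfolding avm_def count size by (simp add: field_simps)
qed

end
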